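(* Let $p\ge 5$ be a prime and $G_{10}=\langle a,b,c,d\mid a^p=b^p=c^p=d^p=1,\ dc=bcd,\ db=abd,\ ad=da,\ bc=cb,\ ac=ca,\ ab=ba\rangle$, with $K=\langle d\rangle$. Then $\mathrm{Aut}_K(G_{10})$ is isomorphic to a group of the form $\mathbb{Z}_{p-1}\times((\mathbb{Z}_p\times\mathbb{Z}_p)\rtimes\mathbb{Z}_{p-1})$.
   Context: $\mathrm{Aut}_K(G)=\{\theta\in\mathrm{Aut}(G)\mid\theta(K)=K\}$. $\mathbb{Z}_m$ is the cyclic group of order $m$. *)

theory Defs
  imports "HOL-Algebra.Algebra"
begin

definition G10_relations :: "('a, 'c) monoid_scheme \<Rightarrow> nat \<Rightarrow> 'a \<Rightarrow> 'a \<Rightarrow> 'a \<Rightarrow> 'a \<Rightarrow> bool" where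
  "G10_relations G p a b c d \<longleftrightarrow>
     a \<in> carrier G \<and> b \<in> carrier G \<and> c \<in> carrier G \<and> d \<in> carrier G \<and>
     a [^]\<^bsub>G\<^esub> p = \<one>\<^bsub>G\<^esub> \<and> b [^]\<^bsub>G\<^esub> p = \<one>\<^bsub>G\<^esub> \<and>
     c [^]\<^bsub>G\<^esub> p = \<one>\<^bsub>G\<^esub> \<and> d [^]\<^bsub>G\<^esub> p = \<one>\<^bsub>G\<^esub> \<and>
     d \<otimes>\<^bsub>G\<^esub> c = b \<otimes>\<^bsub>G\<^esub> c \<otimes>\<^bsub>G\<^esub> d \<and>
     d \<otimes>\<^bsub>G\<^esub> b = a \<otimes>\<^bsub>G\<^esub> b \<otimes>\<^bsub>G\<^esub> d \<and>
     a \<otimes>\<^bsub>G\<^esub> d = d \<otimes>\<^bsub>G\<^esub> a \<and>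
     b \<otimes>\<^bsub>G\<^esub> c = c \<otimes>\<^bsub>G\<^esub> b \<and>
     a \<otimes>\<^bsub>G\<^esub> c = c \<otimes>\<^bsub>G\<^esub> a \<and>
     a \<otimes>\<^bsub>G\<^esub> b = b \<otimes>\<^bsub>G\<^esub> a"

text \<open>G (with distinguished elements a b c d) is a presentation of
  G_10 = <a,b,c,d | relations>: it is a group generated by a b c d satisfying the
  relations, and it has the universal property of the presented group (tested against
  all groups whose carrier lies in the countable type nat, which suffices since the
  presented group is finitely presented hence countable).\<close>
definition is_G10_presentation :: "('a, 'c) monoid_scheme \<Rightarrow> nat \<Rightarrow> 'a \<Rightarrow> 'a \<Rightarrow> 'a \<Rightarrow> 'a \<Rightarrow> bool" where
  "is_G10_presentation G p a b c d \<longleftrightarrow>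
     group G \<and> G10_relations G p a b c d \<and>
     generate G {a, b, c, d} = carrier G \<and>
     (\<forall>(H :: nat monoid) x y z w. group H \<longrightarrow> G10_relations H p x y z w \<longrightarrow>
        (\<exists>h \<in> hom G H. h a = x \<and> h b = y \<and> h c = z \<and> h d = w))"

definition AutK :: "('a, 'c) monoid_scheme \<Rightarrow> 'a set \<Rightarrow> ('a \<Rightarrow> 'a) monoid" where
  "AutK G K = (AutoGroup G)\<lparr>carrier := {\<theta> \<in> auto G. \<theta> ` K = K}\<rparr>"

definition semidirect_product ::
  "('a, 'c) monoid_scheme \<Rightarrow> ('b, 'd) monoid_scheme \<Rightarrow> ('b \<Rightarrow> 'a \<Rightarrow> 'a) \<Rightarrow> ('a \<times> 'b) monoid" where
  "semidirect_product N H \<phi> =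
     \<lparr>carrier = carrier N \<times> carrier H,
      monoid.mult = (\<lambda>(n, h) (n', h'). (n \<otimes>\<^bsub>N\<^esub> \<phi> h n', h \<otimes>\<^bsub>H\<^esub> h')),
      one = (\<one>\<^bsub>N\<^esub>, \<one>\<^bsub>H\<^esub>)\<rparr>"

end

theory Submission
  imports Defs "HOL-Number_Theory.Number_Theory"
begin

text \<open>
  In a group with this presentation every element is a word \<open>a\<^sup>i b\<^sup>j c\<^sup>k d\<^sup>l\<close>, so
  \<open>G\<^sub>1\<^sub>0\<close> has at most \<open>p\<^sup>4\<close> elements. The relations hold in the semidirect product of
  \<open>\<int>\<^sub>p\<^sup>3\<close> by \<open>\<int>\<^sub>p\<close> in which \<open>d\<close> acts by the unipotent map \<open>a \<mapsto> a, b \<mapsto> ab, c \<mapsto> bc\<close>;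
  this group has order \<open>p\<^sup>4\<close> and is generated by the images of \<open>a, b, c, d\<close>, hence it is
  \<open>G\<^sub>1\<^sub>0\<close>, with \<open>K\<close> the last factor.

  An automorphism of this model preserving \<open>\<langle>d\<rangle>\<close> is determined by the images \<open>d\<^sup>k\<close>
  of \<open>d\<close> and \<open>(x, y, z, 0)\<close> of \<open>c\<close>: the relations force the images of \<open>a\<close> and \<open>b\<close>,
  and injectivity forces \<open>p\<close> not to divide \<open>kz\<close>. Writing \<open>(x, y) = (z(v + u\<^sup>2), zu)\<close>, every
  choice of units \<open>k, z\<close> and residues \<open>u, v\<close> occurs, and composition is
  \<open>(k, z, u, v)(k', z', u', v') = (kk', zz', u + ku', v + k\<^sup>2v')\<close>. Taking discrete logarithms
  of \<open>k\<close> and \<open>z\<close> with respect to a primitive root turns this group into the direct product of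
  \<open>\<int>\<^sub>p\<^sub>-\<^sub>1\<close> (for \<open>z\<close>) with the semidirect product of \<open>\<int>\<^sub>p \<times> \<int>\<^sub>p\<close> (for \<open>(u, v)\<close>)
  by \<open>\<int>\<^sub>p\<^sub>-\<^sub>1\<close> (for \<open>k\<close>).
\<close>

lemma (in monoid) nat_pow_intertwine:
  assumes "x \<in> carrier G" "u \<in> carrier G" "w \<in> carrier G" and "x \<otimes> u = w \<otimes> x"
  shows "x \<otimes> u [^] (n::nat) = w [^] n \<otimes> x"
proof (induction n)
  case 0
  then show ?case using assms by simp
next
  case (Suc n)
  have "x \<otimes> u [^] Suc n = (x \<otimes> u [^] n) \<otimes> u"
    using assms by (simp add: m_assoc)
  also have "\<dots> = w [^] n \<otimes> (x \<otimes> u)"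
    using assms Suc by (simp add: m_assoc)
  also have "\<dots> = w [^] Suc n \<otimes> x"
    using assms by (simp add: m_assoc)
  finally show ?case .
qed

lemma (in monoid) nat_pow_mod_exponent:
  assumes "x \<in> carrier G" "x [^] m = \<one>"
  shows "x [^] (n::nat) = x [^] (n mod m)"
proof -
  have "x [^] n = (x [^] m) [^] (n div m) \<otimes> x [^] (n mod m)"
    using assms(1) by (simp add: nat_pow_pow nat_pow_mult)
  then show ?thesis
    using assms by simp
qed

lemma hom_eq_on_generate:
  assumes "group G" "group H" "f \<in> hom G H" "g \<in> hom G H"
    and "S \<subseteq> carrier G" "\<And>s. s \<in> S \<Longrightarrow> f s = g s"
    and "x \<in> generate G S"
  shows "f x = g x"
proof -
  interpret G: group G by fact
  interpret f: group_hom G H f using assms by (simp add: group_hom_def group_hom_axioms_def)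
  interpret g: group_hom G H g using assms by (simp add: group_hom_def group_hom_axioms_def)
  have "subgroup {x \<in> carrier G. f x = g x} G"
    by (rule G.subgroupI) (auto simp: f.hom_inv g.hom_inv)
  then have "generate G S \<subseteq> {x \<in> carrier G. f x = g x}"
    using assms(5,6) by (intro G.generate_subgroup_incl) auto
  then show ?thesis
    using assms(7) by blast
qed

lemma nat_pow_in_generate: "g \<in> S \<Longrightarrow> g [^]\<^bsub>G\<^esub> (n::nat) \<in> generate G S"
  by (induction n) (auto intro: generate.one generate.eng generate.incl)

lemma countable_group_iso_nat_group:
  assumes "group M" "countable (carrier M)"
  shows "\<exists>(H :: nat monoid) f. group H \<and> f \<in> iso M H"
proof -
  interpret M: group M by fact
  obtain f :: "_ \<Rightarrow> nat" where inj: "inj_on f (carrier M)"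
    using assms(2) by (rule countableE)
  define H0 :: "nat monoid" where "H0 = \<lparr>carrier = UNIV,
     monoid.mult = (\<lambda>x y. f (inv_into (carrier M) f x \<otimes>\<^bsub>M\<^esub> inv_into (carrier M) f y)),
     one = f \<one>\<^bsub>M\<^esub>\<rparr>"
  have hom: "f \<in> hom M H0"
    using inj by (auto simp: hom_def H0_def)
  define H where "H = H0\<lparr>carrier := f ` carrier M, one := f \<one>\<^bsub>M\<^esub>\<rparr>"
  have "group H"
    unfolding H_def by (rule M.hom_imp_img_group[OF hom])
  moreover have "f \<in> iso M H"
    using inj hom by (auto simp: iso_def hom_def H_def bij_betw_def)
  ultimately show ?thesis
    by blast
qed

lemma carrier_AutK: "carrier (AutK G K) = {\<theta> \<in> auto G. \<theta> ` K = K}"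
  by (simp add: AutK_def AutoGroup_def)

lemma mult_AutK:
  "\<theta> \<in> auto G \<Longrightarrow> \<theta>' \<in> auto G \<Longrightarrow> \<theta> \<otimes>\<^bsub>AutK G K\<^esub> \<theta>' = compose (carrier G) \<theta> \<theta>'"
  by (simp add: AutK_def AutoGroup_def BijGroup_def auto_def)

lemma auto_iff_iso: "\<theta> \<in> auto G \<longleftrightarrow> \<theta> \<in> iso G G \<and> \<theta> \<in> extensional (carrier G)"
  by (auto simp: auto_def iso_def Bij_def)

lemma auto_conjugate:
  assumes "group H" "f \<in> iso G H" "g \<in> iso H G" "\<theta> \<in> auto G"
  shows "(\<lambda>y \<in> carrier H. f (\<theta> (g y))) \<in> auto H"
proof -
  have "f \<circ> \<theta> \<circ> g \<in> iso H H"
    using assms by (meson auto_iff_iso iso_set_trans)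
  then have "(\<lambda>y \<in> carrier H. f (\<theta> (g y))) \<in> iso H H"
    by (rule group.iso_eq[OF assms(1)]) simp
  then show ?thesis
    by (simp add: auto_iff_iso)
qed

lemma conjugate_in_AutK:
  assumes "group H" "h \<in> iso G H" "h' \<in> iso H G" "\<And>x. x \<in> carrier G \<Longrightarrow> h' (h x) = x"
    and "K \<subseteq> carrier G" "\<theta> \<in> carrier (AutK G K)"
  shows "(\<lambda>y \<in> carrier H. h (\<theta> (h' y))) \<in> carrier (AutK H (h ` K))"
proof -
  have "h x \<in> carrier H" if "x \<in> carrier G" for x
    using assms(2) that by (auto simp: iso_def hom_def)
  then have "(\<lambda>y \<in> carrier H. h (\<theta> (h' y))) ` h ` K = h ` \<theta> ` K"
    unfolding image_image using assms(4,5) by (intro image_cong) auto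
  then show ?thesis
    using auto_conjugate[OF assms(1-3)] assms(6) by (simp add: carrier_AutK)
qed

lemma AutK_iso_image:
  assumes "group G" "group H" "h \<in> iso G H" "K \<subseteq> carrier G"
  shows "AutK G K \<cong> AutK H (h ` K)"
proof -
  define h' where "h' = inv_into (carrier G) h"
  have h': "h' \<in> iso H G"
    unfolding h'_def by (rule group.iso_set_sym[OF assms(1,3)])
  have bij: "bij_betw h (carrier G) (carrier H)"
    using assms(3) by (simp add: iso_def)
  have h'_h [simp]: "h' (h x) = x" if "x \<in> carrier G" for x
    using bij that by (simp add: h'_def bij_betw_inv_into_left)
  have h_h' [simp]: "h (h' y) = y" if "y \<in> carrier H" for y
    using bij that by (simp add: h'_def bij_betw_inv_into_right)
  have h_closed [simp]: "h x \<in> carrier H" if "x \<in> carrier G" for x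
    using bij that by (meson bij_betwE)
  have h'_closed [simp]: "h' y \<in> carrier G" if "y \<in> carrier H" for y
    using h' that by (auto simp: iso_def dest: bij_betwE)
  have auto_closed: "\<theta> x \<in> carrier G" if "\<theta> \<in> auto G" "x \<in> carrier G" for \<theta> x
    using that by (auto simp: auto_def hom_def)
  have auto_closed': "\<rho> y \<in> carrier H" if "\<rho> \<in> auto H" "y \<in> carrier H" for \<rho> y
    using that by (auto simp: auto_def hom_def)
  have "h' ` h ` K = (\<lambda>x. x) ` K"
    unfolding image_image using assms(4) by (intro image_cong) auto
  then have h'_h_K: "h' ` h ` K = K"
    by simp
  define conj where "conj \<theta> = (\<lambda>y \<in> carrier H. h (\<theta> (h' y)))" for \<theta>
  define conj' where "conj' \<rho> = (\<lambda>x \<in> carrier G. h' (\<rho> (h x)))" for \<rho>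
  have conj_in: "conj \<theta> \<in> carrier (AutK H (h ` K))" if "\<theta> \<in> carrier (AutK G K)" for \<theta>
    unfolding conj_def using assms(2-4) h' that by (intro conjugate_in_AutK) auto
  have conj'_in: "conj' \<rho> \<in> carrier (AutK G K)" if "\<rho> \<in> carrier (AutK H (h ` K))" for \<rho>
  proof -
    have "h ` K \<subseteq> carrier H"
      using assms(4) by auto
    then show ?thesis
      using conjugate_in_AutK[OF assms(1) h' assms(3) _ _ that] h'_h_K by (simp add: conj'_def)
  qed
  have "conj \<in> iso (AutK G K) (AutK H (h ` K))"
  proof (rule isoI)
    show "conj \<in> hom (AutK G K) (AutK H (h ` K))"
    proof (rule homI)
      fix \<theta> \<theta>' assume \<theta>: "\<theta> \<in> carrier (AutK G K)" "\<theta>' \<in> carrier (AutK G K)"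
      then have "conj \<theta> \<in> auto H" "conj \<theta>' \<in> auto H"
        using conj_in by (auto simp: carrier_AutK)
      then show "conj (\<theta> \<otimes>\<^bsub>AutK G K\<^esub> \<theta>') = conj \<theta> \<otimes>\<^bsub>AutK H (h ` K)\<^esub> conj \<theta>'"
        using \<theta> by (auto simp: carrier_AutK mult_AutK conj_def compose_def auto_closed
            intro!: restrict_ext)
    qed (rule conj_in)
    show "bij_betw conj (carrier (AutK G K)) (carrier (AutK H (h ` K)))"
    proof (rule bij_betw_byWitness[where f' = conj'])
      show "\<forall>\<theta> \<in> carrier (AutK G K). conj' (conj \<theta>) = \<theta>"
        by (auto simp: carrier_AutK conj_def conj'_def auto_closed auto_def Bij_def
            intro!: extensionalityI[of _ "carrier G"])
      show "\<forall>\<rho> \<in> carrier (AutK H (h ` K)). conj (conj' \<rho>) = \<rho>"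
        by (auto simp: carrier_AutK conj_def conj'_def auto_closed' auto_def Bij_def
            intro!: extensionalityI[of _ "carrier H"])
    qed (use conj_in conj'_in in blast)+
  qed
  then show ?thesis
    by (rule is_isoI)
qed

lemma carrier_semidirect_product: "carrier (semidirect_product N H \<phi>) = carrier N \<times> carrier H"
  by (simp add: semidirect_product_def)

lemma mult_semidirect_product:
  "(n, h) \<otimes>\<^bsub>semidirect_product N H \<phi>\<^esub> (n', h') = (n \<otimes>\<^bsub>N\<^esub> \<phi> h n', h \<otimes>\<^bsub>H\<^esub> h')"
  by (simp add: semidirect_product_def)

lemma one_semidirect_product: "\<one>\<^bsub>semidirect_product N H \<phi>\<^esub> = (\<one>\<^bsub>N\<^esub>, \<one>\<^bsub>H\<^esub>)"
  by (simp add: semidirect_product_def)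

lemma group_semidirect_product:
  assumes "group N" "group H" "\<phi> \<in> hom H (AutoGroup N)"
  shows "group (semidirect_product N H \<phi>)"
proof -
  interpret N: group N by fact
  interpret H: group H by fact
  interpret \<phi>: group_hom H "AutoGroup N" \<phi>
    using assms by (simp add: group_hom_def group_hom_axioms_def N.AutoGroup)
  have auto: "\<phi> h \<in> auto N" if "h \<in> carrier H" for h
    using that \<phi>.hom_closed by (simp add: AutoGroup_def)
  then have closed [simp]: "\<phi> h n \<in> carrier N" if "h \<in> carrier H" "n \<in> carrier N" for h n
    using that by (auto simp: auto_def hom_def)
  have mult [simp]: "\<phi> h (n \<otimes>\<^bsub>N\<^esub> n') = \<phi> h n \<otimes>\<^bsub>N\<^esub> \<phi> h n'"
    if "h \<in> carrier H" "n \<in> carrier N" "n' \<in> carrier N" for h n n'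
    using that auto by (simp add: auto_def hom_def)
  have comp [simp]: "(\<phi> h \<otimes>\<^bsub>AutoGroup N\<^esub> \<phi> h') n = \<phi> h (\<phi> h' n)"
    if "h \<in> carrier H" "h' \<in> carrier H" "n \<in> carrier N" for h h' n
    using that auto by (simp add: AutoGroup_def BijGroup_def auto_def compose_def)
  have one [simp]: "\<one>\<^bsub>AutoGroup N\<^esub> n = n" if "n \<in> carrier N" for n
    using that by (simp add: AutoGroup_def BijGroup_def)
  have fix_one [simp]: "\<phi> h \<one>\<^bsub>N\<^esub> = \<one>\<^bsub>N\<^esub>" if "h \<in> carrier H" for h
    using auto[OF that] by (simp add: auto_def hom_one N.is_group)
  show ?thesis
  proof (rule groupI)
    fix x y z assume "x \<in> carrier (semidirect_product N H \<phi>)" "y \<in> carrier (semidirect_product N H \<phi>)"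
      "z \<in> carrier (semidirect_product N H \<phi>)"
    then show "x \<otimes>\<^bsub>semidirect_product N H \<phi>\<^esub> y \<otimes>\<^bsub>semidirect_product N H \<phi>\<^esub> z =
               x \<otimes>\<^bsub>semidirect_product N H \<phi>\<^esub> (y \<otimes>\<^bsub>semidirect_product N H \<phi>\<^esub> z)"
      by (auto simp: carrier_semidirect_product mult_semidirect_product N.m_assoc H.m_assoc)
  next
    fix x assume "x \<in> carrier (semidirect_product N H \<phi>)"
    then obtain n h where x: "x = (n, h)" "n \<in> carrier N" "h \<in> carrier H"
      by (auto simp: carrier_semidirect_product)
    have "\<phi> (inv\<^bsub>H\<^esub> h) (inv\<^bsub>N\<^esub> n) \<otimes>\<^bsub>N\<^esub> \<phi> (inv\<^bsub>H\<^esub> h) n = \<one>\<^bsub>N\<^esub>"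
      using x by (simp del: \<phi>.hom_inv flip: mult)
    then have "(\<phi> (inv\<^bsub>H\<^esub> h) (inv\<^bsub>N\<^esub> n), inv\<^bsub>H\<^esub> h) \<otimes>\<^bsub>semidirect_product N H \<phi>\<^esub> x =
          \<one>\<^bsub>semidirect_product N H \<phi>\<^esub>"
      using x by (simp add: mult_semidirect_product one_semidirect_product)
    moreover have "(\<phi> (inv\<^bsub>H\<^esub> h) (inv\<^bsub>N\<^esub> n), inv\<^bsub>H\<^esub> h) \<in> carrier (semidirect_product N H \<phi>)"
      using x by (simp add: carrier_semidirect_product del: \<phi>.hom_inv)
    ultimately show "\<exists>y \<in> carrier (semidirect_product N H \<phi>). y \<otimes>\<^bsub>semidirect_product N H \<phi>\<^esub> x =
               \<one>\<^bsub>semidirect_product N H \<phi>\<^esub>"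
      by blast
  qed (auto simp: carrier_semidirect_product mult_semidirect_product one_semidirect_product)
qed

section \<open>Discrete logarithms modulo a prime\<close>

context
  fixes p g :: nat
  assumes prime: "Factorial_Ring.prime p" and primroot: "residue_primroot p g"
begin

lemma coprime_primroot: "coprime g p"
  using primroot by (simp add: residue_primroot_def coprime_commute)

lemma primroot_pow_cong_iff: "[int g ^ i = int g ^ j] (mod int p) \<longleftrightarrow> [i = j] (mod p - 1)"
proof -
  have "coprime p g" "ord p g = p - 1"
    using primroot prime by (simp_all add: residue_primroot_def totient_prime)
  then show ?thesis
    using order_divides_expdiff[of p g i j] by (simp flip: cong_int_iff)
qed

lemma primroot_pow_inj: "i < p - 1 \<Longrightarrow> j < p - 1 \<Longrightarrow> [int g ^ i = int g ^ j] (mod int p) \<Longrightarrow> i = j"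
  by (simp add: primroot_pow_cong_iff cong_less_modulus_unique_nat)

lemma primroot_pow_exp_mod:
  assumes "0 \<le> s" "0 \<le> t"
  shows "[int g ^ nat ((s + t) mod int (p - 1)) = int g ^ nat s * int g ^ nat t] (mod int p)"
proof -
  have "[nat ((s + t) mod int (p - 1)) = nat s + nat t] (mod p - 1)"
    using assms by (simp add: cong_def nat_mod_distrib nat_add_distrib flip: of_nat_diff)
  then show ?thesis
    by (simp add: primroot_pow_cong_iff flip: power_add)
qed

lemma primroot_pow_surj:
  assumes "\<not> int p dvd k"
  shows "\<exists>i < p - 1. [int g ^ i = k] (mod int p)"
proof -
  define m where "m = nat (k mod int p)"
  have "int m = k mod int p"
    using prime by (simp add: m_def prime_gt_0_nat)
  moreover have "0 < m" "m < p"
    using assms prime by (auto simp: m_def dvd_eq_mod_eq_0 prime_gt_0_nat nat_less_iff)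
  moreover have "coprime m p"
    using prime \<open>m < p\<close> \<open>0 < m\<close>
    by (metis coprime_commute nat_dvd_not_less prime_imp_coprime)
  ultimately have "m \<in> (\<lambda>i. g ^ i mod p) ` {..<p - 1}"
    using residue_primroot_is_generator[OF _ primroot] prime
    by (simp add: bij_betw_def totient_prime prime_gt_1_nat totatives_def)
  then obtain i where "i < p - 1" "g ^ i mod p = m"
    by auto
  then have "[int g ^ i = k] (mod int p)"
    using \<open>int m = k mod int p\<close> by (simp add: cong_def flip: of_nat_power zmod_int)
  then show ?thesis
    using \<open>i < p - 1\<close> by blast
qed

end

section \<open>Presentations of \<open>G\<^sub>1\<^sub>0\<close>\<close>

lemma (in group_hom) G10_relations_image:
  assumes "G10_relations G p a b c d"
  shows "G10_relations H p (h a) (h b) (h c) (h d)"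
proof -
  have "h x [^]\<^bsub>H\<^esub> p = \<one>\<^bsub>H\<^esub>" if "x \<in> carrier G" "x [^] p = \<one>" for x
    using that hom_nat_pow[of x p] by simp
  then show ?thesis
    using assms unfolding G10_relations_def by (metis hom_closed hom_mult G.m_closed)
qed

lemma G10_presentation_hom:
  assumes pres: "is_G10_presentation G p a b c d"
    and M: "group M" "countable (carrier M)" and rel: "G10_relations M p x y z w"
  shows "\<exists>h \<in> hom G M. h a = x \<and> h b = y \<and> h c = z \<and> h d = w"
proof -
  interpret M: group M by fact
  interpret G: group G using pres by (simp add: is_G10_presentation_def)
  obtain H :: "nat monoid" and f where H: "group H" "f \<in> iso M H"
    using countable_group_iso_nat_group[OF M] by blast
  interpret f: group_hom M H f
    using H by (simp add: group_hom_def group_hom_axioms_def iso_def)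
  obtain h where h: "h \<in> hom G H" "h a = f x" "h b = f y" "h c = f z" "h d = f w"
    using pres H(1) f.G10_relations_image[OF rel] unfolding is_G10_presentation_def by blast
  have "inv_into (carrier M) f \<in> hom H M"
    using M.iso_set_sym[OF H(2)] by (simp add: iso_def)
  then have "compose (carrier G) (inv_into (carrier M) f) h \<in> hom G M"
    by (rule G.hom_compose[OF h(1)])
  moreover have "inj_on f (carrier M)"
    using H(2) by (simp add: iso_def bij_betw_def)
  moreover have "{x, y, z, w} \<subseteq> carrier M" "{a, b, c, d} \<subseteq> carrier G"
    using rel pres by (auto simp: G10_relations_def is_G10_presentation_def)
  ultimately show ?thesis
    by (intro bexI) (auto simp: compose_def h inv_into_f_f)
qed

locale G10_group = group G for G (structure) +
  fixes p :: nat and a b c d :: 'a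
  assumes G10_relations: "G10_relations G p a b c d"
begin

lemma generators_closed [simp]:
  "a \<in> carrier G" "b \<in> carrier G" "c \<in> carrier G" "d \<in> carrier G"
  using G10_relations by (simp_all add: G10_relations_def)

lemma generators_pow_p:
  "a [^] p = \<one>" "b [^] p = \<one>" "c [^] p = \<one>" "d [^] p = \<one>"
  using G10_relations by (simp_all add: G10_relations_def)

lemma generators_commute:
  "a \<otimes> d = d \<otimes> a" "b \<otimes> c = c \<otimes> b" "a \<otimes> c = c \<otimes> a" "a \<otimes> b = b \<otimes> a"
  using G10_relations by (simp_all add: G10_relations_def)

lemma conj_d:
  "d \<otimes> c = (b \<otimes> c) \<otimes> d" "d \<otimes> b = (a \<otimes> b) \<otimes> d"
  using G10_relations by (simp_all add: G10_relations_def)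

definition word :: "nat \<Rightarrow> nat \<Rightarrow> nat \<Rightarrow> nat \<Rightarrow> 'a" where
  "word i j k l = a [^] i \<otimes> (b [^] j \<otimes> (c [^] k \<otimes> d [^] l))"

lemma word_closed [simp]: "word i j k l \<in> carrier G"
  by (simp add: word_def)

lemma word_0: "word 0 0 0 0 = \<one>"
  by (simp add: word_def)

lemma a_mult_word: "a \<otimes> word i j k l = word (Suc i) j k l"
  using nat_pow_Suc2[of a i] by (simp add: word_def m_assoc[symmetric])

lemma b_mult_word: "b \<otimes> word i j k l = word i (Suc j) k l"
proof -
  have "b \<otimes> a [^] i = a [^] i \<otimes> b"
    by (rule group_commutes_pow[symmetric]) (simp_all add: generators_commute)
  then show ?thesis
    using nat_pow_Suc2[of b j] by (simp add: word_def m_assoc[symmetric])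
qed

lemma c_mult_word: "c \<otimes> word i j k l = word i j (Suc k) l"
proof -
  have ca: "c \<otimes> a [^] i = a [^] i \<otimes> c" and cb: "c \<otimes> b [^] j = b [^] j \<otimes> c"
    by (rule group_commutes_pow[symmetric]; simp add: generators_commute)+
  have "c \<otimes> word i j k l = a [^] i \<otimes> ((c \<otimes> b [^] j) \<otimes> (c [^] k \<otimes> d [^] l))"
    by (simp add: word_def m_assoc[symmetric] ca)
  also have "\<dots> = a [^] i \<otimes> (b [^] j \<otimes> ((c \<otimes> c [^] k) \<otimes> d [^] l))"
    by (simp add: cb m_assoc)
  finally show ?thesis
    using nat_pow_Suc2[of c k] by (simp add: word_def)
qed

lemma d_mult_word: "d \<otimes> word i j k l = word (i + j) (j + k) k (Suc l)"
proof -
  have da: "d \<otimes> a [^] i = a [^] i \<otimes> d"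
    by (rule group_commutes_pow[symmetric]) (simp_all add: generators_commute)
  have "d \<otimes> b [^] j = (a \<otimes> b) [^] j \<otimes> d"
    by (rule nat_pow_intertwine) (simp_all add: conj_d)
  also have "(a \<otimes> b) [^] j = a [^] j \<otimes> b [^] j"
    by (rule pow_mult_distrib) (simp_all add: generators_commute)
  finally have db: "d \<otimes> b [^] j = a [^] j \<otimes> b [^] j \<otimes> d" .
  have "d \<otimes> c [^] k = (b \<otimes> c) [^] k \<otimes> d"
    by (rule nat_pow_intertwine) (simp_all add: conj_d)
  also have "(b \<otimes> c) [^] k = b [^] k \<otimes> c [^] k"
    by (rule pow_mult_distrib) (simp_all add: generators_commute)
  finally have dc: "d \<otimes> c [^] k = b [^] k \<otimes> c [^] k \<otimes> d" .
  have "d \<otimes> word i j k l = a [^] i \<otimes> ((d \<otimes> b [^] j) \<otimes> (c [^] k \<otimes> d [^] l))"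
    by (simp add: word_def m_assoc[symmetric] da)
  also have "\<dots> = a [^] i \<otimes> (a [^] j \<otimes> (b [^] j \<otimes> ((d \<otimes> c [^] k) \<otimes> d [^] l)))"
    by (simp add: db m_assoc)
  also have "\<dots> = (a [^] i \<otimes> a [^] j) \<otimes> ((b [^] j \<otimes> b [^] k) \<otimes> (c [^] k \<otimes> (d \<otimes> d [^] l)))"
    by (simp add: dc m_assoc)
  finally show ?thesis
    using nat_pow_Suc2[of d l] by (simp add: word_def nat_pow_mult)
qed

definition words :: "'a set" where
  "words = {word i j k l | i j k l. True}"

lemma words_closed: "w \<in> words \<Longrightarrow> w \<in> carrier G"
  by (auto simp: words_def)

lemma generator_mult_words: "g \<in> {a, b, c, d} \<Longrightarrow> w \<in> words \<Longrightarrow> g \<otimes> w \<in> words"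
  unfolding words_def using a_mult_word b_mult_word c_mult_word d_mult_word by blast

lemma generator_pow_mult_words:
  assumes "g \<in> {a, b, c, d}" "w \<in> words"
  shows "g [^] (n::nat) \<otimes> w \<in> words"
  using assms(2)
proof (induction n arbitrary: w)
  case 0
  then show ?case
    using words_closed by simp
next
  case (Suc n)
  have "g [^] Suc n \<otimes> w = g [^] n \<otimes> (g \<otimes> w)"
    using assms(1) words_closed[OF Suc.prems] by (auto simp: m_assoc)
  then show ?case
    using Suc.IH[OF generator_mult_words[OF assms(1) Suc.prems]] by simp
qed

lemma inv_generator:
  assumes "0 < p" "g \<in> {a, b, c, d}"
  shows "inv g = g [^] (p - 1)"
proof (rule inv_equality)
  show "g [^] (p - 1) \<otimes> g = \<one>"
    using assms generators_pow_p by (auto simp flip: nat_pow_Suc)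
qed (use assms in auto)

lemma generate_mult_words:
  assumes "0 < p" "x \<in> generate G {a, b, c, d}" "w \<in> words"
  shows "x \<otimes> w \<in> words"
  using assms(2,3)
proof (induction arbitrary: w)
  case one
  then show ?case
    using words_closed by simp
next
  case (incl g)
  then show ?case
    by (rule generator_mult_words)
next
  case (inv g)
  then show ?case
    using generator_pow_mult_words inv_generator[OF assms(1)] by simp
next
  case (eng x y)
  have carrier: "x \<in> carrier G" "y \<in> carrier G" "w \<in> carrier G"
    using eng generate_in_carrier[of "{a, b, c, d}"] words_closed by auto
  have "x \<otimes> (y \<otimes> w) \<in> words"
    using eng by blast
  then show ?case
    by (simp only: m_assoc carrier)
qed

lemma generate_subset_words:
  assumes "0 < p"
  shows "generate G {a, b, c, d} \<subseteq> words"
proof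
  fix x assume x: "x \<in> generate G {a, b, c, d}"
  have "word 0 0 0 0 \<in> words"
    by (auto simp: words_def)
  then have "x \<otimes> word 0 0 0 0 \<in> words"
    by (rule generate_mult_words[OF assms x])
  then show "x \<in> words"
    using x generate_in_carrier[of "{a, b, c, d}"] by (simp add: word_0)
qed

lemma finite_carrier_card_le:
  assumes "generate G {a, b, c, d} = carrier G" "0 < p"
  shows "finite (carrier G)" "card (carrier G) \<le> p ^ 4"
proof -
  let ?S = "{..<p} \<times> {..<p} \<times> {..<p} \<times> {..<p}"
  let ?W = "(\<lambda>(i, j, k, l). word i j k l) ` ?S"
  have sub: "carrier G \<subseteq> ?W"
  proof
    fix g assume "g \<in> carrier G"
    then obtain i j k l where "g = word i j k l"
      using generate_subset_words assms by (auto simp: words_def)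
    also have "\<dots> = word (i mod p) (j mod p) (k mod p) (l mod p)"
      unfolding word_def using generators_pow_p by (simp flip: nat_pow_mod_exponent)
    finally show "g \<in> ?W"
      using assms(2) by (auto intro!: image_eqI[where x = "(i mod p, j mod p, k mod p, l mod p)"])
  qed
  have fin: "finite ?W"
    by simp
  show "finite (carrier G)"
    using finite_subset[OF sub fin] .
  have "card ?W \<le> p ^ 4"
    using card_image_le[of ?S] by (simp add: card_cartesian_product power4_eq_xxxx mult.assoc)
  then show "card (carrier G) \<le> p ^ 4"
    using card_mono[OF fin sub] by linarith
qed

end

lemma G10_presentation_imp_G10_group:
  "is_G10_presentation G p a b c d \<Longrightarrow> G10_group G p a b c d"
  by (simp add: is_G10_presentation_def G10_group_def G10_group_axioms_def)

section \<open>A concrete model of \<open>G\<^sub>1\<^sub>0\<close>\<close>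

type_synonym int4 = "int \<times> int \<times> int \<times> int"

text \<open>\<open>(x, y, z, w)\<close> is the element \<open>(x, y, z)\<close> of \<open>\<int>\<^sub>p\<^sup>3\<close> followed by \<open>d\<^sup>w\<close>; \<open>d\<^sup>w\<close> acts
  on \<open>\<int>\<^sub>p\<^sup>3\<close> by \<open>(x, y, z) \<mapsto> (x + 2wy + w\<^sup>2z, y + wz, z)\<close>, the \<open>w\<close>-th power of the map
  \<open>a \<mapsto> a, b \<mapsto> ab, c \<mapsto> bc\<close> for \<open>a = (2, 0, 0)\<close>, \<open>b = (1, 1, 0)\<close>, \<open>c = (0, 0, 1)\<close>.\<close>

definition model_mult :: "int4 \<Rightarrow> int4 \<Rightarrow> int4" where
  "model_mult = (\<lambda>(x, y, z, w) (x', y', z', w').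
     (x + x' + 2 * w * y' + w\<^sup>2 * z', y + y' + w * z', z + z', w + w'))"

definition mod4 :: "nat \<Rightarrow> int4 \<Rightarrow> int4" where
  "mod4 p = (\<lambda>(x, y, z, w). (x mod int p, y mod int p, z mod int p, w mod int p))"

definition model_group :: "nat \<Rightarrow> int4 monoid" where
  "model_group p =
     \<lparr>carrier = {0..<int p} \<times> {0..<int p} \<times> {0..<int p} \<times> {0..<int p},
      monoid.mult = (\<lambda>u v. mod4 p (model_mult u v)),
      one = (0, 0, 0, 0)\<rparr>"

definition "model_a = ((2::int), (0::int), (0::int), (0::int))"
definition "model_b = ((1::int), (1::int), (0::int), (0::int))"
definition "model_c = ((0::int), (0::int), (1::int), (0::int))"
definition "model_d = ((0::int), (0::int), (0::int), (1::int))"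

lemma model_mult_simp [simp]:
  "model_mult (x, y, z, w) (x', y', z', w') =
     (x + x' + 2 * w * y' + w\<^sup>2 * z', y + y' + w * z', z + z', w + w')"
  by (simp add: model_mult_def)

lemma mod4_simp [simp]: "mod4 p (x, y, z, w) = (x mod int p, y mod int p, z mod int p, w mod int p)"
  by (simp add: mod4_def)

lemma mod4_eq_iff:
  "mod4 p (x, y, z, w) = mod4 p (x', y', z', w') \<longleftrightarrow>
     [x = x'] (mod int p) \<and> [y = y'] (mod int p) \<and> [z = z'] (mod int p) \<and> [w = w'] (mod int p)"
  by (simp add: cong_def)

lemma mod4_mod4 [simp]: "mod4 p (mod4 p u) = mod4 p u"
  by (cases u) simp

lemma model_mult_cong:
  assumes "mod4 p u = mod4 p u'" "mod4 p v = mod4 p v'"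
  shows "mod4 p (model_mult u v) = mod4 p (model_mult u' v')"
  using assms
  by (cases u; cases u'; cases v; cases v'; simp only: mod4_eq_iff model_mult_simp)
     (intro conjI cong_add cong_mult cong_pow cong_refl; simp)

lemma model_mult_assoc: "model_mult (model_mult u v) w = model_mult u (model_mult v w)"
  by (cases u; cases v; cases w) (simp add: algebra_simps power2_eq_square)

lemma model_group_carrier:
  "carrier (model_group p) = {0..<int p} \<times> {0..<int p} \<times> {0..<int p} \<times> {0..<int p}"
  by (simp add: model_group_def)

lemma model_group_mult: "u \<otimes>\<^bsub>model_group p\<^esub> v = mod4 p (model_mult u v)"
  by (simp add: model_group_def)

lemma model_group_one: "\<one>\<^bsub>model_group p\<^esub> = (0, 0, 0, 0)"
  by (simp add: model_group_def)

lemma mod4_in_carrier: "0 < p \<Longrightarrow> mod4 p u \<in> carrier (model_group p)"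
  by (cases u) (simp add: model_group_carrier)

lemma mod4_carrier: "u \<in> carrier (model_group p) \<Longrightarrow> mod4 p u = u"
  by (cases u) (auto simp: model_group_carrier)

lemma mod4_mult_mod4: "mod4 p u \<otimes>\<^bsub>model_group p\<^esub> mod4 p v = mod4 p (model_mult u v)"
  by (simp add: model_group_mult) (rule model_mult_cong; simp)

lemma group_model_group:
  assumes "0 < p"
  shows "group (model_group p)"
proof (rule groupI)
  fix u v assume "u \<in> carrier (model_group p)" "v \<in> carrier (model_group p)"
  then show "u \<otimes>\<^bsub>model_group p\<^esub> v \<in> carrier (model_group p)"
    using assms by (simp add: model_group_mult mod4_in_carrier)
next
  show "\<one>\<^bsub>model_group p\<^esub> \<in> carrier (model_group p)"
    using assms by (simp add: model_group_one model_group_carrier)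
next
  fix u v w assume "u \<in> carrier (model_group p)" "v \<in> carrier (model_group p)"
    "w \<in> carrier (model_group p)"
  then have "mod4 p u = u" "mod4 p w = w"
    by (simp_all add: mod4_carrier)
  then show "u \<otimes>\<^bsub>model_group p\<^esub> v \<otimes>\<^bsub>model_group p\<^esub> w =
             u \<otimes>\<^bsub>model_group p\<^esub> (v \<otimes>\<^bsub>model_group p\<^esub> w)"
    using mod4_mult_mod4[of p "model_mult u v" w] mod4_mult_mod4[of p u "model_mult v w"]
    by (simp add: model_group_mult model_mult_assoc)
next
  fix u assume "u \<in> carrier (model_group p)"
  then show "\<one>\<^bsub>model_group p\<^esub> \<otimes>\<^bsub>model_group p\<^esub> u = u"
    by (cases u) (auto simp: model_group_one model_group_mult model_group_carrier)
next
  fix u assume u: "u \<in> carrier (model_group p)"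
  obtain x y z w where u_eq: "u = (x, y, z, w)"
    by (cases u)
  let ?v = "mod4 p (2 * w * y - w\<^sup>2 * z - x, w * z - y, - z, - w)"
  have "?v \<otimes>\<^bsub>model_group p\<^esub> u =
        mod4 p (2 * w * y - w\<^sup>2 * z - x, w * z - y, - z, - w) \<otimes>\<^bsub>model_group p\<^esub> mod4 p u"
    by (simp only: mod4_carrier[OF u])
  also have "\<dots> = mod4 p (model_mult (2 * w * y - w\<^sup>2 * z - x, w * z - y, - z, - w) u)"
    by (rule mod4_mult_mod4)
  also have "\<dots> = \<one>\<^bsub>model_group p\<^esub>"
    by (simp add: u_eq model_group_one algebra_simps power2_eq_square)
  finally have "?v \<otimes>\<^bsub>model_group p\<^esub> u = \<one>\<^bsub>model_group p\<^esub>" .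
  then show "\<exists>v\<in>carrier (model_group p). v \<otimes>\<^bsub>model_group p\<^esub> u = \<one>\<^bsub>model_group p\<^esub>"
    using assms mod4_in_carrier by blast
qed

lemma nat_pow_model_xyz0:
  "(x, y, z, 0) [^]\<^bsub>model_group p\<^esub> (n::nat) = mod4 p (int n * x, int n * y, int n * z, 0)"
  by (induction n) (simp_all add: model_group_one model_group_mult mod_simps algebra_simps)

lemma nat_pow_model_000w:
  "(0, 0, 0, w) [^]\<^bsub>model_group p\<^esub> (n::nat) = mod4 p (0, 0, 0, int n * w)"
  by (induction n) (simp_all add: model_group_one model_group_mult mod_simps algebra_simps)

lemma model_generators_closed:
  assumes "2 < p"
  shows "{model_a, model_b, model_c, model_d} \<subseteq> carrier (model_group p)"
  using assms by (auto simp: model_a_def model_b_def model_c_def model_d_def model_group_carrier)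

lemma model_G10_relations:
  assumes "2 < p"
  shows "G10_relations (model_group p) p model_a model_b model_c model_d"
  using assms model_generators_closed[OF assms]
  by (simp add: G10_relations_def nat_pow_model_xyz0 nat_pow_model_000w model_group_mult model_group_one
      model_a_def model_b_def model_c_def model_d_def)

lemma model_generated:
  assumes "2 < p" "odd p"
  shows "generate (model_group p) {model_a, model_b, model_c, model_d} = carrier (model_group p)"
proof
  let ?M = "model_group p" and ?S = "{model_a, model_b, model_c, model_d}"
  interpret M: group ?M
    using group_model_group assms by simp
  show "generate ?M ?S \<subseteq> carrier ?M"
    by (rule M.generate_incl[OF model_generators_closed[OF assms(1)]])
  show "carrier ?M \<subseteq> generate ?M ?S"
  proof
    fix u assume u: "u \<in> carrier ?M"
    obtain x y z w where u_eq: "u = (x, y, z, w)"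
      by (cases u)
    have range: "0 \<le> x" "x < int p" "0 \<le> y" "0 \<le> z" "0 \<le> w"
      using u by (auto simp: u_eq model_group_carrier)
    \<comment> \<open>\<open>a\<^sup>i b\<^sup>y c\<^sup>z d\<^sup>w = (2i + y, y, z, w)\<close>, and \<open>2i \<equiv> x - y\<close> is solvable since \<open>p\<close> is odd\<close>
    define i where "i = nat (((x - y) * ((int p + 1) div 2)) mod int p)"
    have "[int i = (x - y) * ((int p + 1) div 2)] (mod int p)"
      unfolding i_def using assms by (simp add: cong_def)
    then have "[2 * int i + y = 2 * ((x - y) * ((int p + 1) div 2)) + y] (mod int p)"
      by (intro cong_add cong_mult cong_refl)
    also have "2 * ((x - y) * ((int p + 1) div 2)) + y = x + (x - y) * int p"
      using \<open>odd p\<close> by (auto elim!: oddE simp: algebra_simps)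
    also have "[x + (x - y) * int p = x] (mod int p)"
      by (simp add: cong_def)
    finally have x_eq: "(2 * int i + y) mod int p = x"
      using range by (simp add: cong_def)
    have "model_a [^]\<^bsub>?M\<^esub> i \<otimes>\<^bsub>?M\<^esub> (model_b [^]\<^bsub>?M\<^esub> nat y \<otimes>\<^bsub>?M\<^esub>
            (model_c [^]\<^bsub>?M\<^esub> nat z \<otimes>\<^bsub>?M\<^esub> model_d [^]\<^bsub>?M\<^esub> nat w))
          = mod4 p (2 * int i + y, y, z, w)"
      using range unfolding model_a_def model_b_def model_c_def model_d_def
      by (simp only: nat_pow_model_xyz0 nat_pow_model_000w mod4_mult_mod4) (simp add: mult.commute)
    also have "\<dots> = u"
      using u x_eq by (simp add: u_eq model_group_carrier)
    finally show "u \<in> generate ?M ?S"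
      by (metis nat_pow_in_generate generate.eng insertCI)
  qed
qed

lemma finite_model_group: "finite (carrier (model_group p))"
  by (simp add: model_group_carrier)

lemma card_model_group: "card (carrier (model_group p)) = p ^ 4"
  by (simp add: model_group_carrier card_cartesian_product power4_eq_xxxx)

theorem G10_presentation_iso_model:
  assumes pres: "is_G10_presentation G p a b c d" and "Factorial_Ring.prime p" "2 < p"
  shows "\<exists>h. h \<in> iso G (model_group p) \<and> h d = model_d"
proof -
  let ?M = "model_group p"
  interpret M: group ?M
    using group_model_group assms by simp
  interpret G: G10_group G p a b c d
    using pres by (rule G10_presentation_imp_G10_group)
  have gen: "generate G {a, b, c, d} = carrier G"
    using pres by (simp add: is_G10_presentation_def)
  have "odd p"
    using assms prime_odd_nat by auto
  obtain h where hom: "h \<in> hom G ?M" "h a = model_a" "h b = model_b" "h c = model_c" "h d = model_d"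
    using G10_presentation_hom[OF pres M.is_group] model_G10_relations[OF \<open>2 < p\<close>]
    by (meson countable_finite finite_model_group)
  interpret h: group_hom G ?M h
    using hom(1) by (simp add: group_hom_def group_hom_axioms_def G.is_group M.is_group)
  have "h ` carrier G = generate ?M (h ` {a, b, c, d})"
    using gen h.generate_img[of "{a, b, c, d}"] by simp
  also have "\<dots> = carrier ?M"
    using hom model_generated[OF \<open>2 < p\<close> \<open>odd p\<close>] by simp
  finally have surj: "h ` carrier G = carrier ?M" .
  have "finite (carrier G)" "card (carrier G) \<le> p ^ 4"
    using G.finite_carrier_card_le[OF gen] assms by auto
  moreover have "card (h ` carrier G) = p ^ 4"
    using surj card_model_group by simp
  ultimately have "inj_on h (carrier G)"
    using card_image_le[of "carrier G" h] by (intro eq_card_imp_inj_on) auto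
  then have "h \<in> iso G ?M"
    using hom surj by (simp add: iso_iff)
  then show ?thesis
    using hom by blast
qed

section \<open>Automorphisms of the model preserving \<open>\<langle>d\<rangle>\<close>\<close>

text \<open>The endomorphism with \<open>d \<mapsto> d\<^sup>k\<close> and \<open>c \<mapsto> (z(v + u\<^sup>2), zu, z, 0)\<close>; this
  parametrisation turns composition into the group law of the target (\<open>model_endo_comp\<close>).\<close>
definition model_endo :: "int \<Rightarrow> int \<Rightarrow> int \<Rightarrow> int \<Rightarrow> int4 \<Rightarrow> int4" where
  "model_endo k z u v = (\<lambda>(x, y, s, w).
     (k\<^sup>2 * z * x + 2 * k * z * u * y + z * (v + u\<^sup>2) * s, k * z * y + z * u * s, z * s, k * w))"

definition model_auto :: "nat \<Rightarrow> int \<Rightarrow> int \<Rightarrow> int \<Rightarrow> int \<Rightarrow> int4 \<Rightarrow> int4" where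
  "model_auto p k z u v = (\<lambda>m \<in> carrier (model_group p). mod4 p (model_endo k z u v m))"

definition model_K :: "nat \<Rightarrow> int4 set" where
  "model_K p = {(0, 0, 0, w) | w. 0 \<le> w \<and> w < int p}"

lemma model_endo_simp [simp]:
  "model_endo k z u v (x, y, s, w) =
     (k\<^sup>2 * z * x + 2 * k * z * u * y + z * (v + u\<^sup>2) * s, k * z * y + z * u * s, z * s, k * w)"
  by (simp add: model_endo_def)

lemma model_endo_cong:
  assumes "mod4 p m = mod4 p m'" "[k = k'] (mod int p)" "[z = z'] (mod int p)"
    "[u = u'] (mod int p)" "[v = v'] (mod int p)"
  shows "mod4 p (model_endo k z u v m) = mod4 p (model_endo k' z' u' v' m')"
  using assms
  by (cases m; cases m'; simp only: mod4_eq_iff model_endo_simp)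
     (intro conjI cong_add cong_mult cong_pow cong_refl; simp)

lemma model_endo_mult: "model_endo k z u v (model_mult m m') = model_mult (model_endo k z u v m) (model_endo k z u v m')"
  by (cases m; cases m') (simp add: algebra_simps power2_eq_square)

lemma model_endo_comp:
  "model_endo k z u v (model_endo k' z' u' v' m) = model_endo (k * k') (z * z') (u + k * u') (v + k\<^sup>2 * v') m"
  by (cases m) (simp add: algebra_simps power2_eq_square)

lemma model_endo_id: "model_endo 1 1 0 0 m = m"
  by (cases m) simp

lemma model_auto_apply: "m \<in> carrier (model_group p) \<Longrightarrow> model_auto p k z u v m = mod4 p (model_endo k z u v m)"
  by (simp add: model_auto_def)

lemma model_auto_d: "1 < p \<Longrightarrow> model_auto p k z u v model_d = mod4 p (0, 0, 0, k)"
  by (simp add: model_auto_apply model_d_def model_group_carrier)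

lemma model_auto_c: "1 < p \<Longrightarrow> model_auto p k z u v model_c = mod4 p (z * (v + u\<^sup>2), z * u, z, 0)"
  by (simp add: model_auto_apply model_c_def model_group_carrier)

lemma model_auto_extensional: "model_auto p k z u v \<in> extensional (carrier (model_group p))"
  by (simp add: model_auto_def)

lemma model_auto_cong:
  assumes "[k = k'] (mod int p)" "[z = z'] (mod int p)" "[u = u'] (mod int p)" "[v = v'] (mod int p)"
  shows "model_auto p k z u v = model_auto p k' z' u' v'"
  unfolding model_auto_def using assms by (intro restrict_ext model_endo_cong) simp_all

lemma generate_model_d:
  assumes "1 < p"
  shows "generate (model_group p) {model_d} = model_K p"
proof
  interpret M: group "model_group p"
    using group_model_group assms by simp
  have "subgroup (model_K p) (model_group p)"
  proof (rule M.subgroupI)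
    show "model_K p \<subseteq> carrier (model_group p)"
      by (auto simp: model_K_def model_group_carrier)
    show "model_K p \<noteq> {}"
      using assms by (auto simp: model_K_def)
    fix m m' assume m: "m \<in> model_K p" and "m' \<in> model_K p"
    then show "m \<otimes>\<^bsub>model_group p\<^esub> m' \<in> model_K p"
      using assms by (auto simp: model_K_def model_group_mult)
    obtain w where w: "m = (0, 0, 0, w)" "0 \<le> w" "w < int p"
      using m by (auto simp: model_K_def)
    have "mod4 p (0, 0, 0, - w) \<otimes>\<^bsub>model_group p\<^esub> m = \<one>\<^bsub>model_group p\<^esub>"
      using w by (simp add: model_group_mult model_group_one mod_add_left_eq)
    then have "inv\<^bsub>model_group p\<^esub> m = mod4 p (0, 0, 0, - w)"
      using m \<open>model_K p \<subseteq> carrier (model_group p)\<close> assms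
      by (intro M.inv_equality) (auto simp: model_group_carrier)
    then show "inv\<^bsub>model_group p\<^esub> m \<in> model_K p"
      using assms by (simp add: model_K_def)
  qed
  then show "generate (model_group p) {model_d} \<subseteq> model_K p"
    using assms by (intro M.generate_subgroup_incl) (auto simp: model_K_def model_d_def)
  show "model_K p \<subseteq> generate (model_group p) {model_d}"
  proof
    fix m assume "m \<in> model_K p"
    then obtain w where "m = (0, 0, 0, w)" "0 \<le> w" "w < int p"
      by (auto simp: model_K_def)
    then have "model_d [^]\<^bsub>model_group p\<^esub> nat w = m"
      by (simp add: model_d_def nat_pow_model_000w)
    then show "m \<in> generate (model_group p) {model_d}"
      by (metis nat_pow_in_generate singletonI)
  qed
qed

lemma model_auto_hom:
  assumes "0 < p"
  shows "model_auto p k z u v \<in> hom (model_group p) (model_group p)"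
proof (rule homI)
  fix m assume "m \<in> carrier (model_group p)"
  then show "model_auto p k z u v m \<in> carrier (model_group p)"
    using assms by (simp add: model_auto_apply mod4_in_carrier)
next
  fix m m' assume m: "m \<in> carrier (model_group p)" "m' \<in> carrier (model_group p)"
  then have "m \<otimes>\<^bsub>model_group p\<^esub> m' \<in> carrier (model_group p)"
    using assms by (simp add: model_group_mult mod4_in_carrier)
  then have "model_auto p k z u v (m \<otimes>\<^bsub>model_group p\<^esub> m') =
             mod4 p (model_endo k z u v (mod4 p (model_mult m m')))"
    by (simp add: model_auto_apply model_group_mult)
  also have "\<dots> = mod4 p (model_mult (model_endo k z u v m) (model_endo k z u v m'))"
    by (subst model_endo_cong[of p _ "model_mult m m'"]) (simp_all add: model_endo_mult)
  also have "\<dots> = model_auto p k z u v m \<otimes>\<^bsub>model_group p\<^esub> model_auto p k z u v m'"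
    using m by (simp add: model_auto_apply mod4_mult_mod4)
  finally show "model_auto p k z u v (m \<otimes>\<^bsub>model_group p\<^esub> m') =
                model_auto p k z u v m \<otimes>\<^bsub>model_group p\<^esub> model_auto p k z u v m'" .
qed

lemma model_auto_inj:
  assumes "coprime k (int p)" "coprime z (int p)"
  shows "inj_on (model_auto p k z u v) (carrier (model_group p))"
proof -
  obtain k' where k': "[k * k' = 1] (mod int p)"
    using cong_solve_coprime_int[OF assms(1)] by blast
  obtain z' where z': "[z * z' = 1] (mod int p)"
    using cong_solve_coprime_int[OF assms(2)] by blast
  \<comment> \<open>the inverse has parameters \<open>(k\<^sup>-\<^sup>1, z\<^sup>-\<^sup>1, -k\<^sup>-\<^sup>1 u, -k\<^sup>-\<^sup>2 v)\<close>, by \<open>model_endo_comp\<close>\<close>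
  let ?inv = "\<lambda>m. mod4 p (model_endo k' z' (- k' * u) (- k'\<^sup>2 * v) m)"
  have "?inv (model_auto p k z u v m) = m" if "m \<in> carrier (model_group p)" for m
  proof -
    have "?inv (model_auto p k z u v m) =
          mod4 p (model_endo k' z' (- k' * u) (- k'\<^sup>2 * v) (model_endo k z u v m))"
      by (simp only: model_auto_apply[OF that]) (rule model_endo_cong; simp)
    also have "\<dots> = mod4 p (model_endo (k' * k) (z' * z) 0 0 m)"
      by (simp add: model_endo_comp)
    also have "\<dots> = mod4 p (model_endo 1 1 0 0 m)"
      using k' z' by (intro model_endo_cong) (simp_all add: mult.commute)
    finally show ?thesis
      using that by (simp add: model_endo_id mod4_carrier)
  qed
  then show ?thesis
    by (rule inj_on_inverseI)
qed

lemma model_auto_in_AutK: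
  assumes "1 < p" "coprime k (int p)" "coprime z (int p)"
  shows "model_auto p k z u v \<in> carrier (AutK (model_group p) (model_K p))"
proof -
  let ?f = "model_auto p k z u v"
  have inj: "inj_on ?f (carrier (model_group p))"
    using model_auto_inj assms by blast
  have hom: "?f \<in> hom (model_group p) (model_group p)"
    using model_auto_hom assms by simp
  then have "?f ` carrier (model_group p) = carrier (model_group p)"
    by (intro endo_inj_surj inj finite_model_group) (auto simp: hom_def)
  then have auto: "?f \<in> auto (model_group p)"
    using inj hom by (simp add: auto_def Bij_def bij_betw_def model_auto_def)
  have K: "model_K p \<subseteq> carrier (model_group p)"
    by (auto simp: model_K_def model_group_carrier)
  have "?f ` model_K p \<subseteq> model_K p"
    using assms K by (auto simp: model_K_def model_auto_apply)
  then have "?f ` model_K p = model_K p"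
    using inj_on_subset[OF inj K] by (intro endo_inj_surj) (simp_all add: model_K_def)
  then show ?thesis
    using auto by (simp add: carrier_AutK)
qed

lemma model_auto_mult:
  assumes "1 < p" "coprime k (int p)" "coprime z (int p)" "coprime k' (int p)" "coprime z' (int p)"
  shows "model_auto p k z u v \<otimes>\<^bsub>AutK (model_group p) (model_K p)\<^esub> model_auto p k' z' u' v' =
         model_auto p (k * k') (z * z') (u + k * u') (v + k\<^sup>2 * v')"
proof -
  have "model_auto p k z u v (model_auto p k' z' u' v' m) =
        model_auto p (k * k') (z * z') (u + k * u') (v + k\<^sup>2 * v') m"
    if "m \<in> carrier (model_group p)" for m
  proof -
    have "model_auto p k z u v (model_auto p k' z' u' v' m) =
          mod4 p (model_endo k z u v (model_endo k' z' u' v' m))"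
      using that assms(1) by (simp add: model_auto_apply mod4_in_carrier) (rule model_endo_cong; simp)
    then show ?thesis
      using that by (simp add: model_auto_apply model_endo_comp)
  qed
  moreover have "model_auto p k z u v \<in> auto (model_group p)" "model_auto p k' z' u' v' \<in> auto (model_group p)"
    using model_auto_in_AutK assms by (simp_all add: carrier_AutK)
  ultimately show ?thesis
    by (simp add: mult_AutK) (rule extensionalityI[OF _ model_auto_extensional]; simp add: compose_def)
qed

lemma model_auto_c_onto:
  assumes "1 < p" "coprime z (int p)"
  obtains u v where "u \<in> {0..<int p}" "v \<in> {0..<int p}"
    "model_auto p k z u v model_c = mod4 p (x, y, z, 0)"
proof -
  obtain z' where z': "[z * z' = 1] (mod int p)"
    using cong_solve_coprime_int[OF assms(2)] by blast
  \<comment> \<open>solve \<open>zu = y\<close> and \<open>z(v + u\<^sup>2) = x\<close> modulo \<open>p\<close>\<close>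
  define u where "u = (y * z') mod int p"
  define v where "v = (x * z' - u\<^sup>2) mod int p"
  have "[u = y * z'] (mod int p)"
    by (simp add: u_def cong_def)
  then have "[z * u = z * (y * z')] (mod int p)"
    by (rule cong_scalar_left)
  also have "z * (y * z') = y * (z * z')"
    by (simp add: ac_simps)
  also have "[y * (z * z') = y * 1] (mod int p)"
    by (intro cong_mult cong_refl z')
  finally have y: "[z * u = y] (mod int p)"
    by simp
  have "[v + u\<^sup>2 = x * z'] (mod int p)"
    using cong_add[of v "x * z' - u\<^sup>2" p "u\<^sup>2" "u\<^sup>2"] by (simp add: v_def cong_def)
  then have "[z * (v + u\<^sup>2) = z * (x * z')] (mod int p)"
    by (rule cong_scalar_left)
  also have "z * (x * z') = x * (z * z')"
    by (simp add: ac_simps)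
  also have "[x * (z * z') = x * 1] (mod int p)"
    by (intro cong_mult cong_refl z')
  finally have x: "[z * (v + u\<^sup>2) = x] (mod int p)"
    by simp
  have "model_auto p k z u v model_c = mod4 p (x, y, z, 0)"
    using assms(1) x y by (simp add: model_auto_c cong_def)
  moreover have "u \<in> {0..<int p}" "v \<in> {0..<int p}"
    using assms(1) by (simp_all add: u_def v_def)
  ultimately show ?thesis
    using that by blast
qed

lemma model_hom_images:
  assumes "2 < p" "\<theta> \<in> hom (model_group p) (model_group p)"
    and d: "\<theta> model_d = mod4 p (0, 0, 0, k)" and c: "\<theta> model_c = mod4 p (x, y, z, w)"
  shows "\<theta> model_b = mod4 p (2 * k * y + k\<^sup>2 * z, k * z, 0, 0)"
    and "\<theta> model_a = mod4 p (2 * k\<^sup>2 * z, 0, 0, 0)"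
    and "[2 * w * k * z = 0] (mod int p)"
proof -
  let ?M = "model_group p"
  interpret M: G10_group ?M p model_a model_b model_c model_d
    using assms group_model_group model_G10_relations by (simp add: G10_group_def G10_group_axioms_def)
  interpret \<theta>: group_hom ?M ?M \<theta>
    using assms(2) by (simp add: group_hom_def group_hom_axioms_def M.is_group)
  have conj: "\<theta> model_d \<otimes>\<^bsub>?M\<^esub> \<theta> g = \<theta> g' \<otimes>\<^bsub>?M\<^esub> \<theta> g \<otimes>\<^bsub>?M\<^esub> \<theta> model_d"
    if "model_d \<otimes>\<^bsub>?M\<^esub> g = g' \<otimes>\<^bsub>?M\<^esub> g \<otimes>\<^bsub>?M\<^esub> model_d" "g \<in> carrier ?M" "g' \<in> carrier ?M" for g g'
    using that by (metis \<theta>.hom_mult M.m_closed M.generators_closed(4))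
  have cancel: "\<theta> g' = mod4 p v"
    if "\<theta> model_d \<otimes>\<^bsub>?M\<^esub> \<theta> g = mod4 p v \<otimes>\<^bsub>?M\<^esub> \<theta> g \<otimes>\<^bsub>?M\<^esub> \<theta> model_d"
      "\<theta> model_d \<otimes>\<^bsub>?M\<^esub> \<theta> g = \<theta> g' \<otimes>\<^bsub>?M\<^esub> \<theta> g \<otimes>\<^bsub>?M\<^esub> \<theta> model_d"
      "g \<in> carrier ?M" "g' \<in> carrier ?M" for g g' v
    using that assms(1) by (simp add: M.m_assoc mod4_in_carrier)
  have eq_c: "\<theta> model_d \<otimes>\<^bsub>?M\<^esub> \<theta> model_c =
        mod4 p (2 * k * y + k\<^sup>2 * z, k * z, 0, 0) \<otimes>\<^bsub>?M\<^esub> \<theta> model_c \<otimes>\<^bsub>?M\<^esub> \<theta> model_d"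
    unfolding c d mod4_mult_mod4 by (simp add: algebra_simps)
  show b: "\<theta> model_b = mod4 p (2 * k * y + k\<^sup>2 * z, k * z, 0, 0)"
    using cancel[OF eq_c conj[OF M.conj_d(1)]] by simp
  have eq_b: "\<theta> model_d \<otimes>\<^bsub>?M\<^esub> \<theta> model_b =
        mod4 p (2 * k\<^sup>2 * z, 0, 0, 0) \<otimes>\<^bsub>?M\<^esub> \<theta> model_b \<otimes>\<^bsub>?M\<^esub> \<theta> model_d"
    unfolding b d mod4_mult_mod4 by (simp add: algebra_simps power2_eq_square)
  show "\<theta> model_a = mod4 p (2 * k\<^sup>2 * z, 0, 0, 0)"
    using cancel[OF eq_b conj[OF M.conj_d(2)]] by simp
  have "\<theta> model_b \<otimes>\<^bsub>?M\<^esub> \<theta> model_c = \<theta> model_c \<otimes>\<^bsub>?M\<^esub> \<theta> model_b"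
    using M.generators_commute(2) by (simp flip: \<theta>.hom_mult)
  then have "[2 * k * y + k\<^sup>2 * z + x = x + (2 * k * y + k\<^sup>2 * z) + 2 * w * (k * z)] (mod int p)"
    unfolding b c mod4_mult_mod4 by (simp add: cong_def)
  then show "[2 * w * k * z = 0] (mod int p)"
    by (simp add: cong_iff_dvd_diff algebra_simps)
qed

lemma model_hom_determined_by_c_d:
  assumes "2 < p" "odd p" "\<theta> \<in> hom (model_group p) (model_group p)" "\<theta>' \<in> hom (model_group p) (model_group p)"
    and "\<theta> model_d = mod4 p (0, 0, 0, k)" "\<theta>' model_d = \<theta> model_d" "\<theta>' model_c = \<theta> model_c"
    and "m \<in> carrier (model_group p)"
  shows "\<theta>' m = \<theta> m"
proof -
  interpret M: group "model_group p"
    using group_model_group assms by simp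
  have "\<theta> model_c \<in> carrier (model_group p)"
    using assms(3) model_generators_closed[OF assms(1)] by (auto simp: hom_def)
  then obtain x y z w where "\<theta> model_c = mod4 p (x, y, z, w)"
    by (metis mod4_carrier prod_cases4)
  then have "\<theta>' g = \<theta> g" if "g \<in> {model_a, model_b, model_c, model_d}" for g
    using that model_hom_images[OF assms(1,3)] model_hom_images[OF assms(1,4)] assms by auto
  then show ?thesis
    using assms hom_eq_on_generate[OF M.is_group M.is_group assms(4,3) model_generators_closed]
      model_generated by blast
qed

lemma model_inj_hom_params:
  assumes "Factorial_Ring.prime p" "2 < p"
    and "\<theta> \<in> hom (model_group p) (model_group p)" "inj_on \<theta> (carrier (model_group p))"
    and "\<theta> model_d = mod4 p (0, 0, 0, k)" "\<theta> model_c = mod4 p (x, y, z, w)"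
  shows "\<not> int p dvd k" "\<not> int p dvd z" "int p dvd w"
proof -
  let ?M = "model_group p"
  interpret M: group ?M
    using group_model_group assms by simp
  note images = model_hom_images[OF assms(2,3,5,6)]
  have "(0, 0, 0, 0) \<in> carrier ?M" "model_a \<in> carrier ?M" "model_a \<noteq> (0, 0, 0, 0)"
    using model_generators_closed[OF assms(2)] assms(2) by (auto simp: model_group_carrier model_a_def)
  then have "\<theta> model_a \<noteq> \<theta> (0, 0, 0, 0)"
    using assms(4) by (metis inj_onD)
  moreover have "\<theta> (0, 0, 0, 0) = (0, 0, 0, 0)"
    using hom_one[OF assms(3) M.is_group M.is_group] by (simp add: model_group_one)
  ultimately have "(2 * k\<^sup>2 * z) mod int p \<noteq> 0"
    using images(2) by simp
  then have nd: "\<not> int p dvd 2 * k\<^sup>2 * z"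
    by (simp add: dvd_eq_mod_eq_0)
  show k: "\<not> int p dvd k"
    using nd by (metis dvd_mult dvd_mult2 power2_eq_square)
  show z: "\<not> int p dvd z"
    using nd by (metis dvd_mult)
  have "\<not> int p dvd 2"
    using nd by (metis dvd_mult2)
  moreover have "Factorial_Ring.prime (int p)"
    using assms(1) by simp
  ultimately show "int p dvd w"
    using images(3) k z by (auto simp: cong_0_iff prime_dvd_mult_iff)
qed

lemma AutK_model_params:
  assumes "Factorial_Ring.prime p" "2 < p" "\<theta> \<in> carrier (AutK (model_group p) (model_K p))"
  shows "\<exists>k x y z. \<theta> model_d = mod4 p (0, 0, 0, k) \<and> \<theta> model_c = mod4 p (x, y, z, 0) \<and>
           \<not> int p dvd k \<and> \<not> int p dvd z"
proof -
  let ?M = "model_group p"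
  have auto: "\<theta> \<in> auto ?M" "\<theta> ` model_K p = model_K p"
    using assms by (auto simp: carrier_AutK)
  then have hom: "\<theta> \<in> hom ?M ?M" and inj: "inj_on \<theta> (carrier ?M)"
    by (auto simp: auto_def Bij_def bij_betw_def)
  have "model_d \<in> model_K p"
    using assms by (simp add: model_d_def model_K_def)
  then have "\<theta> model_d \<in> model_K p"
    using auto by blast
  then obtain k where "\<theta> model_d = (0, 0, 0, k)" "0 \<le> k" "k < int p"
    by (auto simp: model_K_def)
  then have d: "\<theta> model_d = mod4 p (0, 0, 0, k)"
    by simp
  have "\<theta> model_c \<in> carrier ?M"
    using hom model_generators_closed[OF assms(2)] by (auto simp: hom_def)
  then obtain x y z w where c: "\<theta> model_c = mod4 p (x, y, z, w)"
    by (metis mod4_carrier prod_cases4)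
  note params = model_inj_hom_params[OF assms(1,2) hom inj d c]
  then have "\<theta> model_c = mod4 p (x, y, z, 0)"
    using c by (simp add: dvd_eq_mod_eq_0)
  then show ?thesis
    using d params by blast
qed

section \<open>The automorphism group as a semidirect product\<close>

definition scaling :: "nat \<Rightarrow> nat \<Rightarrow> int \<Rightarrow> int \<times> int \<Rightarrow> int \<times> int" where
  "scaling p g t = restrict (\<lambda>(u, v). ((int g ^ nat t * u) mod int p, ((int g ^ nat t)\<^sup>2 * v) mod int p))
     (carrier (integer_mod_group p \<times>\<times> integer_mod_group p))"

definition target_group :: "nat \<Rightarrow> nat \<Rightarrow> (int \<times> (int \<times> int) \<times> int) monoid" where
  "target_group p g = integer_mod_group (p - 1) \<times>\<times>
     semidirect_product (integer_mod_group p \<times>\<times> integer_mod_group p) (integer_mod_group (p - 1))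
       (scaling p g)"

text \<open>\<open>s\<close> and \<open>t\<close> are discrete logarithms, to the base \<open>g\<close>, of the parameters \<open>z\<close> and \<open>k\<close>
  of \<open>model_endo\<close>.\<close>
definition model_auto_of :: "nat \<Rightarrow> nat \<Rightarrow> int \<times> (int \<times> int) \<times> int \<Rightarrow> int4 \<Rightarrow> int4" where
  "model_auto_of p g = (\<lambda>(s, (u, v), t). model_auto p (int g ^ nat t) (int g ^ nat s) u v)"

context
  fixes p g :: nat
  assumes prime: "Factorial_Ring.prime p" and primroot: "residue_primroot p g" and p_gt_2: "2 < p"
begin

lemma carrier_integer_mod_group_p [simp]: "carrier (integer_mod_group p) = {0..<int p}"
  using p_gt_2 by (simp add: carrier_integer_mod_group)

declare coprime_primroot[OF prime primroot, simp]

lemma scaling_auto: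
  assumes "0 \<le> t"
  shows "scaling p g t \<in> auto (integer_mod_group p \<times>\<times> integer_mod_group p)"
proof -
  let ?Z = "integer_mod_group p \<times>\<times> integer_mod_group p" and ?k = "int g ^ nat t"
  have hom: "scaling p g t \<in> hom ?Z ?Z"
    by (rule homI) (auto simp: scaling_def mod_simps distrib_left)
  have inj: "inj_on (scaling p g t) (carrier ?Z)"
  proof (rule inj_onI)
    fix x y assume "x \<in> carrier ?Z" "y \<in> carrier ?Z" "scaling p g t x = scaling p g t y"
    moreover obtain x1 x2 y1 y2 where "x = (x1, x2)" "y = (y1, y2)"
      by fastforce
    ultimately have "[?k * x1 = ?k * y1] (mod int p)" "[?k\<^sup>2 * x2 = ?k\<^sup>2 * y2] (mod int p)"
      and range: "x1 \<in> {0..<int p}" "x2 \<in> {0..<int p}" "y1 \<in> {0..<int p}" "y2 \<in> {0..<int p}"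
      by (auto simp: scaling_def cong_def)
    then have "[x1 = y1] (mod int p)" "[x2 = y2] (mod int p)"
      by (simp_all add: cong_mult_lcancel)
    then show "x = y"
      using range \<open>x = (x1, x2)\<close> \<open>y = (y1, y2)\<close> by (auto intro: cong_less_imp_eq_int)
  qed
  have "scaling p g t ` carrier ?Z = carrier ?Z"
    using hom_carrier[OF hom] inj by (intro endo_inj_surj) simp_all
  then show ?thesis
    using hom inj by (simp add: auto_def Bij_def bij_betw_def scaling_def)
qed

lemma scaling_hom:
  "scaling p g \<in> hom (integer_mod_group (p - 1)) (AutoGroup (integer_mod_group p \<times>\<times> integer_mod_group p))"
proof (rule homI)
  let ?Z = "integer_mod_group p \<times>\<times> integer_mod_group p"
  fix t assume "t \<in> carrier (integer_mod_group (p - 1))"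
  then show "scaling p g t \<in> carrier (AutoGroup ?Z)"
    using scaling_auto p_gt_2 by (simp add: AutoGroup_def carrier_integer_mod_group)
next
  let ?Z = "integer_mod_group p \<times>\<times> integer_mod_group p"
  fix s t assume "s \<in> carrier (integer_mod_group (p - 1))" "t \<in> carrier (integer_mod_group (p - 1))"
  then have st: "0 \<le> s" "0 \<le> t"
    using p_gt_2 by (auto simp: carrier_integer_mod_group)
  have exp: "[int g ^ nat ((s + t) mod int (p - 1)) = int g ^ nat s * int g ^ nat t] (mod int p)"
    by (rule primroot_pow_exp_mod[OF prime primroot st])
  have "scaling p g ((s + t) mod int (p - 1)) x = compose (carrier ?Z) (scaling p g s) (scaling p g t) x" for x
  proof (cases "x \<in> carrier ?Z")
    case True
    moreover obtain u v where "x = (u, v)"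
      by fastforce
    moreover have "[int g ^ nat ((s + t) mod int (p - 1)) * u = int g ^ nat s * (int g ^ nat t * u)] (mod int p)"
      "[(int g ^ nat ((s + t) mod int (p - 1)))\<^sup>2 * v = (int g ^ nat s)\<^sup>2 * ((int g ^ nat t)\<^sup>2 * v)] (mod int p)"
      using cong_mult[OF exp cong_refl[of u]] cong_mult[OF cong_pow[OF exp, of 2] cong_refl[of v]]
      by (simp_all add: power_mult_distrib mult.assoc)
    ultimately show ?thesis
      by (auto simp: compose_def scaling_def cong_def mod_simps)
  qed (simp add: compose_def scaling_def)
  moreover have "scaling p g s \<in> Bij (carrier ?Z)" "scaling p g t \<in> Bij (carrier ?Z)"
    using scaling_auto st by (auto simp: auto_def)
  ultimately show "scaling p g (s \<otimes>\<^bsub>integer_mod_group (p - 1)\<^esub> t) =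
                   scaling p g s \<otimes>\<^bsub>AutoGroup ?Z\<^esub> scaling p g t"
    by (auto simp: AutoGroup_def BijGroup_def)
qed

lemma group_target_group: "group (target_group p g)"
  unfolding target_group_def
  by (intro DirProd_group group_semidirect_product scaling_hom group_integer_mod_group)

lemma carrier_target_group:
  "carrier (target_group p g) = {0..<int (p - 1)} \<times> (({0..<int p} \<times> {0..<int p}) \<times> {0..<int (p - 1)})"
  using p_gt_2 by (simp add: target_group_def carrier_semidirect_product carrier_integer_mod_group)

lemma mult_target_group:
  assumes "0 \<le> u'" "u' < int p" "0 \<le> v'" "v' < int p"
  shows "(s, (u, v), t) \<otimes>\<^bsub>target_group p g\<^esub> (s', (u', v'), t') =
    ((s + s') mod int (p - 1),
     ((u + (int g ^ nat t * u') mod int p) mod int p, (v + ((int g ^ nat t)\<^sup>2 * v') mod int p) mod int p),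
     (t + t') mod int (p - 1))"
  using assms by (simp add: target_group_def mult_semidirect_product scaling_def)

lemma model_auto_of_in_AutK:
  "model_auto_of p g \<tau> \<in> carrier (AutK (model_group p) (model_K p))"
  using p_gt_2 by (auto simp: model_auto_of_def split: prod.split intro!: model_auto_in_AutK)

lemma model_auto_of_mult:
  assumes "\<tau> \<in> carrier (target_group p g)" "\<tau>' \<in> carrier (target_group p g)"
  shows "model_auto_of p g (\<tau> \<otimes>\<^bsub>target_group p g\<^esub> \<tau>') =
         model_auto_of p g \<tau> \<otimes>\<^bsub>AutK (model_group p) (model_K p)\<^esub> model_auto_of p g \<tau>'"
proof -
  obtain s u v t s' u' v' t' where \<tau>: "\<tau> = (s, (u, v), t)" "\<tau>' = (s', (u', v'), t')"
    by (metis prod.collapse)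
  have range: "0 \<le> s" "0 \<le> t" "0 \<le> s'" "0 \<le> t'" "0 \<le> u'" "u' < int p" "0 \<le> v'" "v' < int p"
    using assms by (auto simp: \<tau> carrier_target_group)
  let ?k = "int g ^ nat t" and ?z = "int g ^ nat s" and ?k' = "int g ^ nat t'" and ?z' = "int g ^ nat s'"
  have "model_auto_of p g \<tau> \<otimes>\<^bsub>AutK (model_group p) (model_K p)\<^esub> model_auto_of p g \<tau>' =
        model_auto p (?k * ?k') (?z * ?z') (u + ?k * u') (v + ?k\<^sup>2 * v')"
    using p_gt_2 by (simp add: \<tau> model_auto_of_def model_auto_mult)
  also have "\<dots> = model_auto p (int g ^ nat ((t + t') mod int (p - 1))) (int g ^ nat ((s + s') mod int (p - 1)))
                    ((u + (?k * u') mod int p) mod int p) ((v + (?k\<^sup>2 * v') mod int p) mod int p)"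
    using primroot_pow_exp_mod[OF prime primroot] range
    by (intro model_auto_cong) (simp_all add: cong_sym cong_def mod_simps)
  also have "\<dots> = model_auto_of p g (\<tau> \<otimes>\<^bsub>target_group p g\<^esub> \<tau>')"
    using range by (simp add: \<tau> mult_target_group model_auto_of_def)
  finally show ?thesis
    by (rule sym)
qed

lemma model_auto_of_inj: "inj_on (model_auto_of p g) (carrier (target_group p g))"
proof (rule inj_onI)
  fix \<tau> \<tau>' assume \<tau>_in: "\<tau> \<in> carrier (target_group p g)" "\<tau>' \<in> carrier (target_group p g)"
    and eq: "model_auto_of p g \<tau> = model_auto_of p g \<tau>'"
  obtain s u v t s' u' v' t' where \<tau>: "\<tau> = (s, (u, v), t)" "\<tau>' = (s', (u', v'), t')"
    by (metis prod.collapse)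
  have range: "0 \<le> s" "s < int (p - 1)" "0 \<le> t" "t < int (p - 1)" "0 \<le> s'" "s' < int (p - 1)"
    "0 \<le> t'" "t' < int (p - 1)" "u \<in> {0..<int p}" "v \<in> {0..<int p}" "u' \<in> {0..<int p}" "v' \<in> {0..<int p}"
    using \<tau>_in p_gt_2 by (auto simp: \<tau> carrier_target_group)
  let ?z = "int g ^ nat s" and ?z' = "int g ^ nat s'"
  have "model_auto_of p g \<tau> model_d = model_auto_of p g \<tau>' model_d"
    using eq by simp
  then have "[int g ^ nat t = int g ^ nat t'] (mod int p)"
    using p_gt_2 by (simp add: \<tau> model_auto_of_def model_auto_d cong_def)
  then have t: "t = t'"
    using range primroot_pow_inj[OF prime primroot, of "nat t" "nat t'"] by (simp add: nat_less_iff)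
  have "model_auto_of p g \<tau> model_c = model_auto_of p g \<tau>' model_c"
    using eq by simp
  then have c: "[?z * (v + u\<^sup>2) = ?z' * (v' + u'\<^sup>2)] (mod int p)"
    "[?z * u = ?z' * u'] (mod int p)" "[?z = ?z'] (mod int p)"
    using p_gt_2 by (simp_all add: \<tau> model_auto_of_def model_auto_c cong_def)
  then have s: "s = s'"
    using range primroot_pow_inj[OF prime primroot, of "nat s" "nat s'"] by (simp add: nat_less_iff)
  have "[u = u'] (mod int p)"
    using c(2) by (simp add: s cong_mult_lcancel)
  then have u: "u = u'"
    using range by (auto intro: cong_less_imp_eq_int)
  have "[v + u\<^sup>2 = v' + u\<^sup>2] (mod int p)"
    using c(1) by (simp add: s u cong_mult_lcancel)
  then have "v = v'"
    using range by (auto simp: cong_add_rcancel intro: cong_less_imp_eq_int)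
  then show "\<tau> = \<tau>'"
    by (simp add: \<tau> s t u)
qed

lemma model_auto_of_surj:
  assumes \<theta>: "\<theta> \<in> carrier (AutK (model_group p) (model_K p))"
  shows "\<theta> \<in> model_auto_of p g ` carrier (target_group p g)"
proof -
  let ?M = "model_group p"
  obtain k x y z where d: "\<theta> model_d = mod4 p (0, 0, 0, k)" and c: "\<theta> model_c = mod4 p (x, y, z, 0)"
    and k: "\<not> int p dvd k" and z: "\<not> int p dvd z"
    using AutK_model_params[OF prime p_gt_2 \<theta>] by blast
  obtain i where i: "i < p - 1" "[int g ^ i = k] (mod int p)"
    using primroot_pow_surj[OF prime primroot k] by blast
  obtain j where j: "j < p - 1" "[int g ^ j = z] (mod int p)"
    using primroot_pow_surj[OF prime primroot z] by blast
  have "coprime z (int p)"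
    using prime_imp_coprime[of "int p" z] z prime by (simp add: coprime_commute)
  then obtain u v where uv: "u \<in> {0..<int p}" "v \<in> {0..<int p}"
    and c_eq: "model_auto p k z u v model_c = \<theta> model_c"
    using model_auto_c_onto[of p z k x y] p_gt_2 c by auto
  define \<tau> where "\<tau> = (int j, (u, v), int i)"
  have \<tau>_in: "\<tau> \<in> carrier (target_group p g)"
    using i(1) j(1) uv p_gt_2 by (auto simp: \<tau>_def carrier_target_group)
  have "model_auto_of p g \<tau> = model_auto p (int g ^ i) (int g ^ j) u v"
    by (simp add: \<tau>_def model_auto_of_def)
  also have "\<dots> = model_auto p k z u v"
    using i(2) j(2) by (intro model_auto_cong) simp_all
  finally have \<tau>_eq: "model_auto_of p g \<tau> = model_auto p k z u v" .
  have hom: "model_auto_of p g \<tau> \<in> hom ?M ?M" "\<theta> \<in> hom ?M ?M"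
    and ext: "model_auto_of p g \<tau> \<in> extensional (carrier ?M)" "\<theta> \<in> extensional (carrier ?M)"
    using model_auto_of_in_AutK[of \<tau>] \<theta> by (auto simp: carrier_AutK auto_def Bij_def)
  have "odd p"
    using prime p_gt_2 prime_odd_nat by blast
  have "model_auto_of p g \<tau> model_d = \<theta> model_d" "model_auto_of p g \<tau> model_c = \<theta> model_c"
    using p_gt_2 by (simp_all add: \<tau>_eq model_auto_d d c_eq)
  then have "model_auto_of p g \<tau> m = \<theta> m" if "m \<in> carrier ?M" for m
    using model_hom_determined_by_c_d[OF p_gt_2 \<open>odd p\<close> hom(2,1) d _ _ that] by blast
  then have "model_auto_of p g \<tau> = \<theta>"
    by (rule extensionalityI[OF ext])
  then show ?thesis
    using \<tau>_in by blast
qed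

lemma model_auto_of_iso: "model_auto_of p g \<in> iso (target_group p g) (AutK (model_group p) (model_K p))"
proof (rule isoI)
  show "model_auto_of p g \<in> hom (target_group p g) (AutK (model_group p) (model_K p))"
    by (rule homI) (simp_all add: model_auto_of_in_AutK model_auto_of_mult)
  show "bij_betw (model_auto_of p g) (carrier (target_group p g)) (carrier (AutK (model_group p) (model_K p)))"
    using model_auto_of_inj model_auto_of_surj model_auto_of_in_AutK by (auto simp: bij_betw_def)
qed

end

theorem mainTheorem11:
  fixes G :: "('a, 'c) monoid_scheme" and p :: nat and a b c d :: 'a
  assumes "Factorial_Ring.prime p" and "p \<ge> 5"
    and "is_G10_presentation G p a b c d"
  shows "\<exists>\<phi>. \<phi> \<in> hom (integer_mod_group (p - 1))
                     (AutoGroup (integer_mod_group p \<times>\<times> integer_mod_group p)) \<and>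
             AutK G (generate G {d}) \<cong>
               integer_mod_group (p - 1) \<times>\<times>
                 semidirect_product (integer_mod_group p \<times>\<times> integer_mod_group p)
                   (integer_mod_group (p - 1)) \<phi>"
proof -
  have "2 < p"
    using assms(2) by simp
  obtain g where g: "residue_primroot p g"
    using prime_primitive_root_exists[of p] assms(1) prime_gt_1_nat by blast
  obtain h where h: "h \<in> iso G (model_group p)" "h d = model_d"
    using G10_presentation_iso_model[OF assms(3,1) \<open>2 < p\<close>] by blast
  interpret G: G10_group G p a b c d
    using assms(3) by (rule G10_presentation_imp_G10_group)
  have "group_hom G (model_group p) h"
    using h(1) group_model_group[of p] \<open>2 < p\<close>
    by (simp add: group_hom_def group_hom_axioms_def iso_def G.is_group)
  then have "h ` generate G {d} = generate (model_group p) {model_d}"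
    using group_hom.generate_img[of G "model_group p" h "{d}"] h(2) by simp
  also have "\<dots> = model_K p"
    using \<open>2 < p\<close> by (simp add: generate_model_d)
  finally have "AutK G (generate G {d}) \<cong> AutK (model_group p) (model_K p)"
    using AutK_iso_image[OF G.is_group group_model_group h(1) G.generate_incl[of "{d}"]] \<open>2 < p\<close> by simp
  also have "AutK (model_group p) (model_K p) \<cong> target_group p g"
    using group.iso_sym[OF group_target_group is_isoI[OF model_auto_of_iso]] assms(1) g \<open>2 < p\<close> by blast
  finally show ?thesis
    using scaling_hom[OF assms(1) g \<open>2 < p\<close>] unfolding target_group_def by blast
qed

end
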